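(* For any input word $w\neq\sharp$, the LinMaxMatch tokenization procedure returns exactly the MaxMatch result $M(w)$: it calls MatchLoop$(w\sqcup,0)$ on the (non-augmented) trie, obtaining (tokens, $u$, $i$); if $i<|w|$ or $u\notin\{r,r_\sharp\}$ it returns $[\mathrm{UNK}]$, otherwise it returns tokens, and this output equals $M(w)$.
   Context: Setting: WordPiece tokenization with vocabulary $V$, suffix indicator string $\sharp$ (e.g. "##"), unknown token $[\mathrm{UNK}]$; $\sqcup$ is a whitespace character not in the vocabulary alphabet. A trie is built from $V$ with root $r$ and node $r_\sharp$ for $\sharp$; $\delta(u,c)$ is the child of $u$ along edge $c$, or null; $\chi_v$ is the string of node $v$. $p_w$: longest non-empty prefix of $w$ in $V\setminus\{\varepsilon,\sharp\}$ (length not counting a leading $\sharp$; must start with $\sharp$ if $w$ does), $\varepsilon$ if none; $q_w:=\sharp w''$ where $w=p_w w''$. MaxMatch: $M(w)=[\,]$ if $w\in\{\varepsilon,\sharp\}$; else $[\mathrm{UNK}]$ if $p_w=\varepsilon$ or $M(q_w)=[\mathrm{UNK}]$; else $[p_w]+M(q_w)$. Failure link $f(v)$ and failure pops $F(v)$ of a node $v$ (with $w=\chi_v$): if $p_w=\varepsilon$ then $f(v)=\mathrm{null}$, $F(v)=[\,]$; otherwise $F(v)$ is the shortest non-empty list of successive longest-matching-prefix tokens popped from the start of $w$ until the remaining suffix (prefixed with $\sharp$) is represented by a trie node, and $f(v)$ is that node (null if impossible). MatchLoop$(s,i)$: set $u=r$, tokens $=[\,]$; while $i<|s|$: while $\delta(u,s[i])=\mathrm{null}$: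 if $f(u)=\mathrm{null}$ return (tokens,$u$,$i$); append $F(u)$ to tokens; $u\leftarrow f(u)$. Then $u\leftarrow\delta(u,s[i])$, $i\leftarrow i+1$. Finally return (tokens,$u$,$i$). *)

theory Defs
  imports Main "HOL-Library.While_Combinator" "HOL-Library.Sublist"
begin

text \<open>Strings are lists of characters of type 'a. V is the vocabulary, sh the
suffix indicator, ws the whitespace character. Tokens are vocabulary strings or UNK.\<close>

datatype 'a token = Tok "'a list" | UNK

definition cand :: "'a list set \<Rightarrow> 'a list \<Rightarrow> 'a list \<Rightarrow> 'a list \<Rightarrow> bool" where
  "cand V sh w p \<longleftrightarrow> p \<in> V - {[], sh} \<and> prefix p w \<and> (prefix sh w \<longrightarrow> prefix sh p)"

definition pw :: "'a list set \<Rightarrow> 'a list \<Rightarrow> 'a list \<Rightarrow> 'a list" where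
  "pw V sh w = (if \<exists>p. cand V sh w p
     then (THE p. cand V sh w p \<and> (\<forall>q. cand V sh w q \<longrightarrow> length q \<le> length p))
     else [])"

definition qw :: "'a list set \<Rightarrow> 'a list \<Rightarrow> 'a list \<Rightarrow> 'a list" where
  "qw V sh w = sh @ drop (length (pw V sh w)) w"

definition mu :: "'a list \<Rightarrow> 'a list \<Rightarrow> nat" where
  "mu sh w = length w - (if prefix sh w then length sh else 0)"

lemma cand_finite: "finite {p. cand V sh w p}"
proof -
  have "{p. cand V sh w p} \<subseteq> set (prefixes w)" by (auto simp: cand_def)
  then show ?thesis using finite_subset by blast
qed

lemma cand_longest_ex:
  assumes "cand V sh w p0"
  shows "\<exists>p. cand V sh w p \<and> (\<forall>q. cand V sh w q \<longrightarrow> length q \<le> length p)"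
proof -
  let ?S = "{p. cand V sh w p}"
  have ne: "length ` ?S \<noteq> {}" using assms by auto
  have fin: "finite (length ` ?S)" using cand_finite by blast
  obtain p where "p \<in> ?S" "length p = Max (length ` ?S)"
    using Max_in[OF fin ne] by auto
  moreover have "length q \<le> length p" if "cand V sh w q" for q
  proof -
    have "length q \<in> length ` ?S" using that by blast
    then show ?thesis using Max_ge[OF fin] \<open>length p = _\<close> by simp
  qed
  ultimately show ?thesis by blast
qed

lemma pw_cand:
  assumes "\<exists>p. cand V sh w p"
  shows "cand V sh w (pw V sh w)"
proof -
  obtain p where p: "cand V sh w p" "\<forall>q. cand V sh w q \<longrightarrow> length q \<le> length p"
    using assms cand_longest_ex by blast
  have uniq: "x = p" if "cand V sh w x" "\<forall>q. cand V sh w q \<longrightarrow> length q \<le> length x" for x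
  proof -
    have "length x = length p" using that p by (meson le_antisym)
    moreover have "prefix x w" "prefix p w" using that p by (auto simp: cand_def)
    ultimately have "prefix x p" "prefix p x" using prefix_length_prefix[of x w p] prefix_length_prefix[of p w x] by auto
    then show ?thesis by (rule prefix_order.antisym)
  qed
  have "(THE x. cand V sh w x \<and> (\<forall>q. cand V sh w q \<longrightarrow> length q \<le> length x)) = p"
    apply (rule the_equality)
    using p uniq by blast+
  then show ?thesis using assms p by (simp add: pw_def)
qed

lemma pw_decreases:
  assumes "pw V sh w \<noteq> []"
  shows "mu sh (qw V sh w) < mu sh w"
proof -
  have ex: "\<exists>p. cand V sh w p"
  proof (rule ccontr)
    assume "\<not> (\<exists>p. cand V sh w p)"
    then have "pw V sh w = []" unfolding pw_def by (rule if_not_P)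
    then show False using assms by simp
  qed
  have c: "cand V sh w (pw V sh w)" using pw_cand[OF ex] .
  let ?p = "pw V sh w"
  have pre: "prefix ?p w" and ne: "?p \<noteq> []" and nsh: "?p \<noteq> sh"
    and psh: "prefix sh w \<longrightarrow> prefix sh ?p" using c unfolding cand_def by simp_all
  have lp: "length ?p \<le> length w" using pre by (simp add: prefix_length_le)
  have mq: "mu sh (qw V sh w) = length w - length ?p" by (simp add: mu_def qw_def)
  show ?thesis
  proof (cases "prefix sh w")
    case True
    then have "prefix sh ?p" using psh by simp
    then have "strict_prefix sh ?p" using nsh by (simp add: strict_prefix_def)
    then have "length sh < length ?p" by (rule prefix_length_less)
    then show ?thesis using True mq lp by (simp add: mu_def)
  next
    case False
    have "0 < length ?p" using ne by simp
    then have "length w - length ?p < length w" using lp by linarith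
    then show ?thesis using False mq by (simp add: mu_def)
  qed
qed

function MaxMatch :: "'a list set \<Rightarrow> 'a list \<Rightarrow> 'a list \<Rightarrow> 'a token list" where
  "MaxMatch V sh w =
     (if w = [] \<or> w = sh then []
      else if pw V sh w = [] then [UNK]
      else if MaxMatch V sh (qw V sh w) = [UNK] then [UNK]
      else Tok (pw V sh w) # MaxMatch V sh (qw V sh w))"
  by auto
termination
  by (relation "measure (\<lambda>(V, sh, w). mu sh w)") (simp_all add: pw_decreases)

text \<open>Trie nodes are identified with their strings chi_v: all prefixes of
vocabulary strings and of sh. The root r is [] and r_sh is sh.\<close>
definition trie_nodes :: "'a list set \<Rightarrow> 'a list \<Rightarrow> 'a list set" where
  "trie_nodes V sh = {x. \<exists>v \<in> V \<union> {sh}. prefix x v}"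

definition delta :: "'a list set \<Rightarrow> 'a list \<Rightarrow> 'a list \<Rightarrow> 'a \<Rightarrow> 'a list option" where
  "delta V sh u c = (if u @ [c] \<in> trie_nodes V sh then Some (u @ [c]) else None)"

function fpops :: "'a list set \<Rightarrow> 'a list \<Rightarrow> 'a list \<Rightarrow> ('a token list \<times> 'a list) option" where
  "fpops V sh x =
     (if pw V sh x = [] then None
      else if qw V sh x \<in> trie_nodes V sh then Some ([Tok (pw V sh x)], qw V sh x)
      else (case fpops V sh (qw V sh x) of
              None \<Rightarrow> None
            | Some (ts, u) \<Rightarrow> Some (Tok (pw V sh x) # ts, u)))"
  by auto
termination
  by (relation "measure (\<lambda>(V, sh, x). mu sh x)") (simp_all add: pw_decreases)

definition fail_link :: "'a list set \<Rightarrow> 'a list \<Rightarrow> 'a list \<Rightarrow> 'a list option" where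
  "fail_link V sh u = map_option snd (fpops V sh u)"

definition fail_pops :: "'a list set \<Rightarrow> 'a list \<Rightarrow> 'a list \<Rightarrow> 'a token list" where
  "fail_pops V sh u = (case fpops V sh u of None \<Rightarrow> [] | Some (ts, _) \<Rightarrow> ts)"

text \<open>MatchLoop(s, i0), with the nested while loops flattened into one loop over
states (tokens, u, i, returned). Result None means the loop does not terminate.\<close>
definition MatchLoop :: "'a list set \<Rightarrow> 'a list \<Rightarrow> 'a list \<Rightarrow> nat
    \<Rightarrow> ('a token list \<times> 'a list \<times> nat) option" where
  "MatchLoop V sh s i0 =
     map_option (\<lambda>(t, u, i, ret). (t, u, i))
      (while_option (\<lambda>(t, u, i, ret). \<not> ret \<and> i < length s)
        (\<lambda>(t, u, i, ret).
           case delta V sh u (s ! i) of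
             Some u' \<Rightarrow> (t, u', Suc i, False)
           | None \<Rightarrow> (case fail_link V sh u of
                         None \<Rightarrow> (t, u, i, True)
                       | Some u' \<Rightarrow> (t @ fail_pops V sh u, u', i, False)))
        ([], [], i0, False))"

definition LinMaxMatch :: "'a list set \<Rightarrow> 'a list \<Rightarrow> 'a \<Rightarrow> 'a list \<Rightarrow> 'a token list option" where
  "LinMaxMatch V sh ws w =
     map_option (\<lambda>(t, u, i). if i < length w \<or> u \<notin> {[], sh} then [UNK] else t)
       (MatchLoop V sh (w @ [ws]) 0)"

end

theory Submission
  imports Defs
begin

text \<open>If the walk along \<open>x z\<close> leaves the trie right after \<open>x\<close>, no vocabulary word
(and not the suffix indicator) extends past \<open>x\<close>, so the longest-match prefix of \<open>x z\<close>
is that of \<open>x\<close> and one MaxMatch step on \<open>x z\<close> is the step on \<open>x\<close> followed by \<open>z\<close>.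
Hence following a failure link replays MaxMatch's steps on the node string and
continues with the unread input, which gives the loop invariant: the emitted tokens,
prepended to the MaxMatch result of the current node string followed by the
unread input, yield \<open>M(w)\<close>. The whitespace sentinel is never on a trie edge, so
the loop always ends stuck at a node without failure link; MaxMatch of the
remaining string is then \<open>[]\<close> or \<open>[UNK]\<close>, exactly as the final test decides.\<close>

declare MaxMatch.simps[simp del] fpops.simps[simp del]

definition prepend_tokens :: "'a token list \<Rightarrow> 'a token list \<Rightarrow> 'a token list" where
  "prepend_tokens ts m = (if m = [UNK] then [UNK] else ts @ m)"

lemma prepend_tokens_Nil [simp]: "prepend_tokens [] m = m"
  by (simp add: prepend_tokens_def)

lemma prepend_tokens_append:
  assumes "UNK \<notin> set ps"
  shows "prepend_tokens ts (prepend_tokens ps m) = prepend_tokens (ts @ ps) m"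
  using assms by (cases ps) (auto simp: prepend_tokens_def)

definition trie_blocked :: "'a list set \<Rightarrow> 'a list \<Rightarrow> 'a list \<Rightarrow> 'a list \<Rightarrow> bool" where
  "trie_blocked V sh x z \<longleftrightarrow> z = [] \<or> x @ [hd z] \<notin> trie_nodes V sh"

lemma trie_nodes_prefix_closed: "y \<in> trie_nodes V sh \<Longrightarrow> prefix x y \<Longrightarrow> x \<in> trie_nodes V sh"
  by (auto simp: trie_nodes_def intro: prefix_order.trans)

lemma prefix_trie_node_sh: "prefix x sh \<Longrightarrow> x \<in> trie_nodes V sh"
  by (auto simp: trie_nodes_def)

lemma trie_blocked_if_not_node: "x \<notin> trie_nodes V sh \<Longrightarrow> trie_blocked V sh x z"
  by (auto simp: trie_blocked_def dest: trie_nodes_prefix_closed[OF _ prefixI])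

lemma prefix_append_blocked:
  assumes "v \<in> V \<union> {sh}" and "trie_blocked V sh x z" and "prefix v (x @ z)"
  shows "prefix v x"
proof (rule ccontr)
  assume "\<not> prefix v x"
  with assms(3) obtain c us where "v = x @ c # us" and "prefix (c # us) z"
    by (auto simp: prefix_append neq_Nil_conv)
  then have "z \<noteq> []" and "prefix (x @ [hd z]) v"
    by (auto simp: prefix_def)
  then show False
    using assms(1,2) by (auto simp: trie_blocked_def trie_nodes_def)
qed

lemma cand_append_blocked:
  assumes "trie_blocked V sh x z"
  shows "cand V sh (x @ z) = cand V sh x"
  using prefix_append_blocked[OF _ assms] by (auto simp: cand_def fun_eq_iff)

lemma pw_append_blocked: "trie_blocked V sh x z \<Longrightarrow> pw V sh (x @ z) = pw V sh x"
  by (simp add: pw_def cand_append_blocked)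

lemma pw_Nil: "pw V sh [] = []"
  by (auto simp: pw_def cand_def)

lemma pw_sh: "pw V sh sh = []"
  by (auto simp: pw_def cand_def dest: prefix_order.antisym)

lemma pw_prefix: "prefix (pw V sh x) x"
  by (metis Nil_prefix cand_def pw_cand pw_def)

lemma qw_append_blocked:
  "trie_blocked V sh x z \<Longrightarrow> qw V sh (x @ z) = qw V sh x @ z"
  using prefix_length_le[OF pw_prefix, of V sh x] by (simp add: qw_def pw_append_blocked)

lemma MaxMatch_pw_Nil:
  "pw V sh y = [] \<Longrightarrow> MaxMatch V sh y = (if y = [] \<or> y = sh then [] else [UNK])"
  by (subst MaxMatch.simps) simp

lemma MaxMatch_append_blocked:
  assumes "pw V sh x \<noteq> []" and "trie_blocked V sh x z"
  shows "MaxMatch V sh (x @ z) = prepend_tokens [Tok (pw V sh x)] (MaxMatch V sh (qw V sh x @ z))"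
proof -
  have "x @ z \<noteq> []" and "x @ z \<noteq> sh"
    using assms pw_Nil pw_sh pw_append_blocked by metis+
  then show ?thesis
    using assms by (subst MaxMatch.simps) (simp add: prepend_tokens_def pw_append_blocked qw_append_blocked)
qed

lemma fpops_SomeE:
  assumes "fpops V sh x = Some (ps, u)"
  obtains "pw V sh x \<noteq> []" "qw V sh x \<in> trie_nodes V sh" "ps = [Tok (pw V sh x)]" "u = qw V sh x"
  | ts where "pw V sh x \<noteq> []" "qw V sh x \<notin> trie_nodes V sh"
      "fpops V sh (qw V sh x) = Some (ts, u)" "ps = Tok (pw V sh x) # ts"
  using assms by (subst (asm) fpops.simps) (auto split: if_splits option.splits)

lemma fpops_NoneE:
  assumes "fpops V sh x = None"
  obtains "pw V sh x = []"
  | "pw V sh x \<noteq> []" "qw V sh x \<notin> trie_nodes V sh" "fpops V sh (qw V sh x) = None"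
  using assms by (subst (asm) fpops.simps) (auto split: if_splits option.splits)

lemma fpops_Some_no_UNK: "fpops V sh x = Some (ps, u) \<Longrightarrow> UNK \<notin> set ps"
proof (induction V sh x arbitrary: ps rule: fpops.induct)
  case (1 V sh x)
  from "1.prems" show ?case
    by (cases rule: fpops_SomeE) (use "1.IH" in auto)
qed

lemma fpops_Some_mu_less: "fpops V sh x = Some (ps, u) \<Longrightarrow> mu sh u < mu sh x"
proof (induction V sh x arbitrary: ps rule: fpops.induct)
  case (1 V sh x)
  from "1.prems" show ?case
    by (cases rule: fpops_SomeE) (use "1.IH" pw_decreases[of V sh x] in fastforce)+
qed

lemma MaxMatch_fpops_Some:
  "fpops V sh x = Some (ps, u) \<Longrightarrow> trie_blocked V sh x z \<Longrightarrow>
   MaxMatch V sh (x @ z) = prepend_tokens ps (MaxMatch V sh (u @ z))"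
proof (induction V sh x arbitrary: ps rule: fpops.induct)
  case (1 V sh x)
  from "1.prems"(1) show ?case
  proof (cases rule: fpops_SomeE)
    case 1
    then show ?thesis using "1.prems"(2) by (simp add: MaxMatch_append_blocked)
  next
    case (2 ts)
    have "MaxMatch V sh (qw V sh x @ z) = prepend_tokens ts (MaxMatch V sh (u @ z))"
      using "1.IH" 2 trie_blocked_if_not_node by blast
    then show ?thesis
      using 2 "1.prems"(2) fpops_Some_no_UNK[OF 2(3)] prepend_tokens_append[of ts "[_]"]
      by (simp add: MaxMatch_append_blocked)
  qed
qed

lemma MaxMatch_fpops_None:
  "fpops V sh x = None \<Longrightarrow> sh \<noteq> [] \<Longrightarrow> trie_blocked V sh x z \<Longrightarrow>
   MaxMatch V sh (x @ z) = (if x @ z = [] \<or> x @ z = sh then [] else [UNK])"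
proof (induction V sh x rule: fpops.induct)
  case (1 V sh x)
  from "1.prems"(1) show ?case
  proof (cases rule: fpops_NoneE)
    case 1
    then show ?thesis using "1.prems"(3) by (simp add: MaxMatch_pw_Nil pw_append_blocked)
  next
    case 2
    have "qw V sh x @ z \<noteq> sh"
      using 2(2) prefixI prefix_trie_node_sh by metis
    moreover have "qw V sh x @ z \<noteq> []"
      using "1.prems"(2) by (simp add: qw_def)
    ultimately have "MaxMatch V sh (qw V sh x @ z) = [UNK]"
      using "1.IH" 2 "1.prems"(2) trie_blocked_if_not_node by metis
    moreover have "x @ z \<noteq> [] \<and> x @ z \<noteq> sh"
      using 2 "1.prems"(3) pw_Nil pw_sh pw_append_blocked by metis
    ultimately show ?thesis
      using 2 "1.prems"(3) by (simp add: MaxMatch_append_blocked prepend_tokens_def)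
  qed
qed

lemma append_ws_not_trie_node:
  assumes "\<forall>v \<in> V. ws \<notin> set v" and "ws \<notin> set sh"
  shows "u @ [ws] \<notin> trie_nodes V sh"
  using assms set_mono_prefix by (fastforce simp: trie_nodes_def)

lemma trie_blocked_drop:
  "u @ [(w @ [c]) ! i] \<notin> trie_nodes V sh \<Longrightarrow> trie_blocked V sh u (drop i w)"
  by (cases "i < length w") (auto simp: trie_blocked_def hd_drop_conv_nth nth_append)

lemma append_drop_nth_step:
  "i < length w \<Longrightarrow> u @ drop i w = (u @ [(w @ [c]) ! i]) @ drop (Suc i) w"
  by (simp add: Cons_nth_drop_Suc nth_append)

definition match_guard :: "'a list \<Rightarrow> 'a token list \<times> 'a list \<times> nat \<times> bool \<Rightarrow> bool" where
  "match_guard s = (\<lambda>(t, u, i, ret). \<not> ret \<and> i < length s)"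

definition match_step :: "'a list set \<Rightarrow> 'a list \<Rightarrow> 'a list
    \<Rightarrow> 'a token list \<times> 'a list \<times> nat \<times> bool \<Rightarrow> 'a token list \<times> 'a list \<times> nat \<times> bool" where
  "match_step V sh s = (\<lambda>(t, u, i, ret).
     case delta V sh u (s ! i) of
       Some u' \<Rightarrow> (t, u', Suc i, False)
     | None \<Rightarrow> (case fail_link V sh u of
                   None \<Rightarrow> (t, u, i, True)
                 | Some u' \<Rightarrow> (t @ fail_pops V sh u, u', i, False)))"

lemma MatchLoop_while_option:
  "MatchLoop V sh s i0 = map_option (\<lambda>(t, u, i, ret). (t, u, i))
     (while_option (match_guard s) (match_step V sh s) ([], [], i0, False))"
  unfolding MatchLoop_def match_guard_def match_step_def ..

lemma match_step_trie_node:
  "u @ [s ! i] \<in> trie_nodes V sh \<Longrightarrow> match_step V sh s (t, u, i, ret) = (t, u @ [s ! i], Suc i, False)"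
  by (simp add: match_step_def delta_def)

lemma match_step_fpops_Some:
  "u @ [s ! i] \<notin> trie_nodes V sh \<Longrightarrow> fpops V sh u = Some (ps, u') \<Longrightarrow>
   match_step V sh s (t, u, i, ret) = (t @ ps, u', i, False)"
  by (simp add: match_step_def delta_def fail_link_def fail_pops_def)

lemma match_step_fpops_None:
  "u @ [s ! i] \<notin> trie_nodes V sh \<Longrightarrow> fpops V sh u = None \<Longrightarrow>
   match_step V sh s (t, u, i, ret) = (t, u, i, True)"
  by (simp add: match_step_def delta_def fail_link_def)

lemma match_loop_terminates:
  "\<exists>st'. while_option (match_guard s) (match_step V sh s) st = Some st'"
proof (rule wf_while_option_Some[where P = "\<lambda>_. True"])
  let ?m = "measures [\<lambda>(t, u, i, ret). length s - i, \<lambda>(t, u, i, ret). mu sh u + (if ret then 0 else 1)]"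
  have decreasing: "(match_step V sh s (t, u, i, ret), (t, u, i, ret)) \<in> ?m"
    if "match_guard s (t, u, i, ret)" for t u i ret
  proof (cases "u @ [s ! i] \<in> trie_nodes V sh")
    case True
    then show ?thesis using that by (auto simp: match_guard_def match_step_trie_node)
  next
    case False
    then show ?thesis
      using that fpops_Some_mu_less
      by (cases "fpops V sh u") (auto simp: match_guard_def match_step_fpops_Some match_step_fpops_None)
  qed
  have "{(st', st). (True \<and> match_guard s st) \<and> st' = match_step V sh s st} \<subseteq> ?m"
    using decreasing by (auto simp del: in_measures)
  then show "wf {(st', st). (True \<and> match_guard s st) \<and> st' = match_step V sh s st}"
    by (rule wf_subset[OF wf_measures])
qed simp_all

definition match_inv :: "'a list set \<Rightarrow> 'a list \<Rightarrow> 'a \<Rightarrow> 'a list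
    \<Rightarrow> 'a token list \<times> 'a list \<times> nat \<times> bool \<Rightarrow> bool" where
  "match_inv V sh ws w = (\<lambda>(t, u, i, ret).
     i \<le> length w \<and> UNK \<notin> set t
     \<and> MaxMatch V sh w = prepend_tokens t (MaxMatch V sh (u @ drop i w))
     \<and> (ret \<longrightarrow> fpops V sh u = None \<and> u @ [(w @ [ws]) ! i] \<notin> trie_nodes V sh))"

lemma match_inv_step:
  assumes "\<forall>v \<in> V. ws \<notin> set v" and "ws \<notin> set sh"
    and "match_inv V sh ws w st" and "match_guard (w @ [ws]) st"
  shows "match_inv V sh ws w (match_step V sh (w @ [ws]) st)"
proof -
  obtain t u i ret where st: "st = (t, u, i, ret)"
    by (cases st)
  let ?c = "(w @ [ws]) ! i"
  have i: "i \<le> length w" and t: "UNK \<notin> set t"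
    and M: "MaxMatch V sh w = prepend_tokens t (MaxMatch V sh (u @ drop i w))"
    using assms(3) st by (simp_all add: match_inv_def)
  consider (node) "u @ [?c] \<in> trie_nodes V sh"
    | (pops) ps u' where "u @ [?c] \<notin> trie_nodes V sh" "fpops V sh u = Some (ps, u')"
    | (stop) "u @ [?c] \<notin> trie_nodes V sh" "fpops V sh u = None"
    by (cases "fpops V sh u") force+
  then show ?thesis
  proof cases
    case node
    then have "i < length w"
      using i append_ws_not_trie_node[OF assms(1,2)] by (cases "i < length w") auto
    then show ?thesis
      using node st t M append_drop_nth_step[of i w u ws]
      by (simp add: match_step_trie_node match_inv_def)
  next
    case pops
    have "MaxMatch V sh (u @ drop i w) = prepend_tokens ps (MaxMatch V sh (u' @ drop i w))"
      using MaxMatch_fpops_Some[OF pops(2) trie_blocked_drop[OF pops(1)]] .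
    then show ?thesis
      using pops st i t M fpops_Some_no_UNK[OF pops(2)]
      by (simp add: match_step_fpops_Some match_inv_def prepend_tokens_append)
  next
    case stop
    then show ?thesis
      using st i t M by (simp add: match_step_fpops_None match_inv_def)
  qed
qed

lemma MaxMatch_at_match_exit:
  assumes "sh \<noteq> []" and "match_inv V sh ws w (t, u, i, ret)"
    and "\<not> match_guard (w @ [ws]) (t, u, i, ret)"
  shows "MaxMatch V sh w = (if i < length w \<or> u \<notin> {[], sh} then [UNK] else t)"
proof -
  let ?c = "(w @ [ws]) ! i"
  have M: "MaxMatch V sh w = prepend_tokens t (MaxMatch V sh (u @ drop i w))"
    and stuck: "u @ [?c] \<notin> trie_nodes V sh" and "fpops V sh u = None"
    using assms(2,3) by (auto simp: match_inv_def match_guard_def)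
  have rest: "MaxMatch V sh (u @ drop i w) =
      (if u @ drop i w = [] \<or> u @ drop i w = sh then [] else [UNK])"
    using MaxMatch_fpops_None[OF \<open>fpops V sh u = None\<close> assms(1) trie_blocked_drop[OF stuck]] .
  show ?thesis
  proof (cases "i < length w")
    case True
    have "u @ drop i w \<noteq> sh"
    proof
      assume "u @ drop i w = sh"
      with append_drop_nth_step[OF True] have "prefix (u @ [?c]) sh"
        by (auto simp: prefix_def)
      then show False
        using stuck prefix_trie_node_sh by blast
    qed
    then show ?thesis
      using True M rest by (simp add: prepend_tokens_def)
  next
    case False
    then show ?thesis
      using M rest by (auto simp: prepend_tokens_def)
  qed
qed

theorem mainTheorem5:
  fixes V :: "'a list set" and sh :: "'a list" and ws :: 'a and w :: "'a list"
  assumes "finite V"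
    and "sh \<noteq> []"
    and "\<forall>v \<in> V. ws \<notin> set v"
    and "ws \<notin> set sh"
    and "w \<noteq> sh"
  shows "LinMaxMatch V sh ws w = Some (MaxMatch V sh w)"
proof -
  let ?s = "w @ [ws]"
  obtain st where loop: "while_option (match_guard ?s) (match_step V sh ?s) ([], [], 0, False) = Some st"
    using match_loop_terminates by blast
  have "match_inv V sh ws w st"
  proof (rule while_option_rule[OF _ loop])
    show "match_inv V sh ws w ([], [], 0, False)"
      by (simp add: match_inv_def)
  qed (rule match_inv_step[OF assms(3,4)])
  moreover have "\<not> match_guard ?s st"
    using while_option_stop[OF loop] .
  ultimately show ?thesis
    using MaxMatch_at_match_exit[OF assms(2)] loop
    by (cases st) (simp add: LinMaxMatch_def MatchLoop_while_option)
qed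

end
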